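(* Let $\mathbf{Sober}$ be the category of sober semitopologies with continuous maps, and $\mathbf{Spatial}$ the category of spatial semiframes with semiframe morphisms. Define $\mathrm{Fr}(\mathsf P,\mathcal O)=(\mathcal O,\subseteq,\between)$ and, for a continuous $f$, $\mathrm{Fr}(f)=f^{-1}$; define $\mathrm{St}$ on objects as below and, for a semiframe morphism $g:(X',\le',\ast')\to(X,\le,\ast)$, $\mathrm{St}(g)=g^\circ:\mathrm{Points}(X,\le,\ast)\to\mathrm{Points}(X',\le',\ast')$, $g^\circ(F)=\{x'\in X'\mid g(x')\in F\}$. Then $\mathrm{Fr}:\mathbf{Sober}\to\mathbf{Spatial}^{op}$ and $\mathrm{St}:\mathbf{Spatial}^{op}\to\mathbf{Sober}$ are well-defined functors forming an equivalence of categories (a duality between $\mathbf{Sober}$ and $\mathbf{Spatial}$), with natural isomorphisms $\mathrm{nbhd}:(\mathsf P,\mathcal O)\to\mathrm{St}\,\mathrm{Fr}(\mathsf P,\mathcal O)$, $p\mapsto\{O\in\mathcal O\mid p\in O\}$, and $\mathrm{Op}:(X,\le,\ast)\to\mathrm{Fr}\,\mathrm{St}(X,\le,\ast)$, $x\mapsto\mathrm{Op}(x)$.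
   Context: A semitopology is a set $\mathsf P$ with $\mathcal O\subseteq\mathcal P(\mathsf P)$ containing $\varnothing,\mathsf P$ and closed under arbitrary unions; morphisms are continuous maps (preimages of opens are open). A semiframe is a complete join-semilattice $(X,\le)$ (with $\bot_X=\bigvee\varnothing$, $\top_X=\bigvee X$) with a relation $\ast$ that is commutative, satisfies $x\ast x$ for $x\neq\bot_X$, and $x\ast\bigvee Y$ iff $x\ast y$ for some $y\in Y$; $(\mathcal O,\subseteq,\between)$, where $O\between O'$ iff $O\cap O'\ne\varnothing$, is a semiframe. A semiframe morphism $g:(X',\le',\ast')\to(X,\le,\ast)$ is a map preserving all joins and the top element ($g(\top_{X'})=\top_X$) such that $g(x')\ast g(x'')$ implies $x'\ast' x''$. An abstract point is a nonempty, up-closed, pairwise $\ast$-compatible subset $F$ that is completely prime ($\bigvee Y\in F$ implies some $y\in Y$ lies in $F$, for all $Y$ including $\varnothing$); $\mathrm{Points}(X,\le,\ast)$ is the set of abstract points; $\mathrm{Op}(x)$ is the set of abstract points containing $x$; $\mathrm{St}(X,\le,\ast)$ is the semitopology with points $\mathrm{Points}(X,\le,\ast)$ and opens $\{\mathrm{Op}(x)\mid x\in X\}$. A semiframe is spatial when $\mathrm{Op}(x)\subseteq\mathrm{Op}(x')$ implies $x\le x'$, and $x\ast x'$ implies $\mathrm{Op}(x)\cap\mathrm{Op}(x')\ne\varnothing$. A semitopology is sober when $\mathrm{nbhd}$ is a bijection from $\mathsf P$ onto $\mathrm{Points}(\mathcal O,\subseteq,\between)$. *)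

theory Defs
  imports Main
begin

definition semitopology :: "'a set \<Rightarrow> 'a set set \<Rightarrow> bool" where
  "semitopology P T \<longleftrightarrow> T \<subseteq> Pow P \<and> {} \<in> T \<and> P \<in> T \<and> (\<forall>S. S \<subseteq> T \<longrightarrow> \<Union>S \<in> T)"

definition cont :: "'a set \<Rightarrow> 'a set set \<Rightarrow> 'b set \<Rightarrow> 'b set set \<Rightarrow> ('a \<Rightarrow> 'b) \<Rightarrow> bool" where
  "cont P T P' T' f \<longleftrightarrow> f ` P \<subseteq> P' \<and> (\<forall>U\<in>T'. f -` U \<inter> P \<in> T)"

definition between :: "'a set \<Rightarrow> 'a set \<Rightarrow> bool" where
  "between A B \<longleftrightarrow> A \<inter> B \<noteq> {}"

definition nbhd :: "'a set set \<Rightarrow> 'a \<Rightarrow> 'a set set" where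
  "nbhd T p = {U \<in> T. p \<in> U}"

definition is_lub :: "'x set \<Rightarrow> ('x \<Rightarrow> 'x \<Rightarrow> bool) \<Rightarrow> 'x set \<Rightarrow> 'x \<Rightarrow> bool" where
  "is_lub X le Y j \<longleftrightarrow> j \<in> X \<and> (\<forall>y\<in>Y. le y j) \<and> (\<forall>u\<in>X. (\<forall>y\<in>Y. le y u) \<longrightarrow> le j u)"

definition complete_join_semilattice :: "'x set \<Rightarrow> ('x \<Rightarrow> 'x \<Rightarrow> bool) \<Rightarrow> bool" where
  "complete_join_semilattice X le \<longleftrightarrow>
     (\<forall>x\<in>X. le x x) \<and>
     (\<forall>x\<in>X. \<forall>y\<in>X. le x y \<and> le y x \<longrightarrow> x = y) \<and>
     (\<forall>x\<in>X. \<forall>y\<in>X. \<forall>z\<in>X. le x y \<and> le y z \<longrightarrow> le x z) \<and>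
     (\<forall>Y. Y \<subseteq> X \<longrightarrow> (\<exists>j. is_lub X le Y j))"

definition sjoin :: "'x set \<Rightarrow> ('x \<Rightarrow> 'x \<Rightarrow> bool) \<Rightarrow> 'x set \<Rightarrow> 'x" where
  "sjoin X le Y = (THE j. is_lub X le Y j)"

definition semiframe :: "'x set \<Rightarrow> ('x \<Rightarrow> 'x \<Rightarrow> bool) \<Rightarrow> ('x \<Rightarrow> 'x \<Rightarrow> bool) \<Rightarrow> bool" where
  "semiframe X le cm \<longleftrightarrow> complete_join_semilattice X le \<and>
     (\<forall>x\<in>X. \<forall>y\<in>X. cm x y \<longleftrightarrow> cm y x) \<and>
     (\<forall>x\<in>X. x \<noteq> sjoin X le {} \<longrightarrow> cm x x) \<and>
     (\<forall>x\<in>X. \<forall>Y. Y \<subseteq> X \<longrightarrow> (cm x (sjoin X le Y) \<longleftrightarrow> (\<exists>y\<in>Y. cm x y)))"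

definition points :: "'x set \<Rightarrow> ('x \<Rightarrow> 'x \<Rightarrow> bool) \<Rightarrow> ('x \<Rightarrow> 'x \<Rightarrow> bool) \<Rightarrow> 'x set set" where
  "points X le cm = {F. F \<subseteq> X \<and> F \<noteq> {} \<and>
     (\<forall>x\<in>F. \<forall>y\<in>X. le x y \<longrightarrow> y \<in> F) \<and>
     (\<forall>x\<in>F. \<forall>y\<in>F. cm x y) \<and>
     (\<forall>Y. Y \<subseteq> X \<longrightarrow> sjoin X le Y \<in> F \<longrightarrow> (\<exists>y\<in>Y. y \<in> F))}"

definition opp :: "'x set \<Rightarrow> ('x \<Rightarrow> 'x \<Rightarrow> bool) \<Rightarrow> ('x \<Rightarrow> 'x \<Rightarrow> bool) \<Rightarrow> 'x \<Rightarrow> 'x set set" where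
  "opp X le cm x = {F \<in> points X le cm. x \<in> F}"

text \<open>the opens of St(X,le,cm); its points are points X le cm\<close>
definition st_opens :: "'x set \<Rightarrow> ('x \<Rightarrow> 'x \<Rightarrow> bool) \<Rightarrow> ('x \<Rightarrow> 'x \<Rightarrow> bool) \<Rightarrow> 'x set set set" where
  "st_opens X le cm = opp X le cm ` X"

definition spatial :: "'x set \<Rightarrow> ('x \<Rightarrow> 'x \<Rightarrow> bool) \<Rightarrow> ('x \<Rightarrow> 'x \<Rightarrow> bool) \<Rightarrow> bool" where
  "spatial X le cm \<longleftrightarrow> semiframe X le cm \<and>
     (\<forall>x\<in>X. \<forall>x'\<in>X. opp X le cm x \<subseteq> opp X le cm x' \<longrightarrow> le x x') \<and>
     (\<forall>x\<in>X. \<forall>x'\<in>X. cm x x' \<longrightarrow> opp X le cm x \<inter> opp X le cm x' \<noteq> {})"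

definition sober :: "'a set \<Rightarrow> 'a set set \<Rightarrow> bool" where
  "sober P T \<longleftrightarrow> semitopology P T \<and> bij_betw (nbhd T) P (points T (\<subseteq>) between)"

definition sf_morphism :: "'y set \<Rightarrow> ('y \<Rightarrow> 'y \<Rightarrow> bool) \<Rightarrow> ('y \<Rightarrow> 'y \<Rightarrow> bool) \<Rightarrow>
    'x set \<Rightarrow> ('x \<Rightarrow> 'x \<Rightarrow> bool) \<Rightarrow> ('x \<Rightarrow> 'x \<Rightarrow> bool) \<Rightarrow> ('y \<Rightarrow> 'x) \<Rightarrow> bool" where
  "sf_morphism X' le' cm' X le cm g \<longleftrightarrow> g ` X' \<subseteq> X \<and>
     (\<forall>Y. Y \<subseteq> X' \<longrightarrow> g (sjoin X' le' Y) = sjoin X le (g ` Y)) \<and>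
     g (sjoin X' le' X') = sjoin X le X \<and>
     (\<forall>x\<in>X'. \<forall>y\<in>X'. cm (g x) (g y) \<longrightarrow> cm' x y)"

definition fr_map :: "'a set \<Rightarrow> ('a \<Rightarrow> 'b) \<Rightarrow> 'b set \<Rightarrow> 'a set" where
  "fr_map P f U = f -` U \<inter> P"

definition st_map :: "'y set \<Rightarrow> ('y \<Rightarrow> 'x) \<Rightarrow> 'x set \<Rightarrow> 'y set" where
  "st_map X' g F = {x' \<in> X'. g x' \<in> F}"

end

theory Submission
  imports Defs
begin

(* An abstract point F of a semiframe X is recovered from its neighbourhood {Op x | x \<in> F} in St(X),
   every abstract point of St(X) arises this way, and Op turns joins into unions; so St(X) is sober
   for every semiframe X, and spatiality says exactly that Op is injective and reflects
   compatibility, i.e. is an isomorphism onto the opens of St(X). Dually, in a sober semitopology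
   p \<in> U holds iff U \<in> nbhd p, which makes nbhd a homeomorphism onto St(Fr(P)) and the semiframe
   of opens spatial. Functoriality and naturality are elementwise computations with preimages. *)

section \<open>Complete join-semilattices\<close>

lemma is_lub_unique:
  assumes "complete_join_semilattice X le" "is_lub X le Y j" "is_lub X le Y j'"
  shows "j = j'"
  using assms unfolding complete_join_semilattice_def is_lub_def by metis

lemma sjoin_eqI:
  assumes "complete_join_semilattice X le" "is_lub X le Y j"
  shows "sjoin X le Y = j"
  unfolding sjoin_def using assms is_lub_unique by (metis the_equality)

lemma is_lub_sjoin:
  assumes "complete_join_semilattice X le" "Y \<subseteq> X"
  shows "is_lub X le Y (sjoin X le Y)"
proof -
  obtain j where "is_lub X le Y j"
    using assms unfolding complete_join_semilattice_def by blast
  with sjoin_eqI[OF assms(1)] show ?thesis by simp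
qed

lemma sjoin_in:
  "complete_join_semilattice X le \<Longrightarrow> Y \<subseteq> X \<Longrightarrow> sjoin X le Y \<in> X"
  using is_lub_sjoin is_lub_def by metis

lemma sjoin_upper:
  "complete_join_semilattice X le \<Longrightarrow> Y \<subseteq> X \<Longrightarrow> y \<in> Y \<Longrightarrow> le y (sjoin X le Y)"
  using is_lub_sjoin is_lub_def by metis

lemma sjoin_pair_le:
  assumes "complete_join_semilattice X le" "x \<in> X" "y \<in> X" "le x y"
  shows "sjoin X le {x, y} = y"
proof (rule sjoin_eqI[OF assms(1)])
  have "le y y"
    using assms(1,3) unfolding complete_join_semilattice_def by blast
  then show "is_lub X le {x, y} y"
    using assms unfolding is_lub_def by auto
qed

lemma sjoin_inv_into:
  assumes cjs: "complete_join_semilattice X' le'" and bij: "bij_betw g X' X"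
    and join: "\<And>Y. Y \<subseteq> X' \<Longrightarrow> g (sjoin X' le' Y) = sjoin X le (g ` Y)" and "Y \<subseteq> X"
  shows "inv_into X' g (sjoin X le Y) = sjoin X' le' (inv_into X' g ` Y)"
proof -
  let ?Z = "inv_into X' g ` Y"
  have Z: "?Z \<subseteq> X'"
    using assms by (auto simp: bij_betw_def intro: inv_into_into)
  have "g (inv_into X' g y) = y" if "y \<in> Y" for y
    using that assms by (metis bij_betw_def f_inv_into_f subsetD)
  then have "g ` ?Z = Y"
    by (simp add: image_image)
  then have "sjoin X le Y = g (sjoin X' le' ?Z)"
    using join[OF Z] by simp
  then show ?thesis
    using bij sjoin_in[OF cjs Z] by (simp add: bij_betw_def)
qed

section \<open>Semitopologies\<close>

lemma is_lub_Union: "\<Union>Y \<in> T \<Longrightarrow> Y \<subseteq> T \<Longrightarrow> is_lub T (\<subseteq>) Y (\<Union>Y)"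
  unfolding is_lub_def by auto

lemma complete_join_semilattice_opens:
  "semitopology P T \<Longrightarrow> complete_join_semilattice T (\<subseteq>)"
  unfolding complete_join_semilattice_def semitopology_def
  by (blast intro: is_lub_Union)

lemma sjoin_opens: "semitopology P T \<Longrightarrow> Y \<subseteq> T \<Longrightarrow> sjoin T (\<subseteq>) Y = \<Union>Y"
  by (metis complete_join_semilattice_opens is_lub_Union semitopology_def sjoin_eqI)

lemma semiframe_opens:
  assumes "semitopology P T"
  shows "semiframe T (\<subseteq>) between"
  using sjoin_opens[OF assms] complete_join_semilattice_opens[OF assms]
  unfolding semiframe_def between_def by auto

lemma opens_subset_points: "semitopology P T \<Longrightarrow> U \<in> T \<Longrightarrow> U \<subseteq> P"
  unfolding semitopology_def by blast

lemma sober_imp_semitopology: "sober P T \<Longrightarrow> semitopology P T"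
  by (simp add: sober_def)

lemma cont_image_subset: "cont P T P' T' f \<Longrightarrow> f ` P \<subseteq> P'"
  by (simp add: cont_def)

lemma nbhd_iff [simp]: "U \<in> nbhd T p \<longleftrightarrow> U \<in> T \<and> p \<in> U"
  by (simp add: nbhd_def)

section \<open>Abstract points\<close>

lemma pointsI:
  assumes "F \<subseteq> X" "F \<noteq> {}" "\<And>x y. x \<in> F \<Longrightarrow> y \<in> X \<Longrightarrow> le x y \<Longrightarrow> y \<in> F"
    "\<And>x y. x \<in> F \<Longrightarrow> y \<in> F \<Longrightarrow> cm x y"
    "\<And>Y. Y \<subseteq> X \<Longrightarrow> sjoin X le Y \<in> F \<Longrightarrow> \<exists>y\<in>Y. y \<in> F"
  shows "F \<in> points X le cm"
  using assms unfolding points_def by blast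

lemma pointsD:
  assumes "F \<in> points X le cm"
  shows "F \<subseteq> X" "F \<noteq> {}" "\<And>x y. x \<in> F \<Longrightarrow> y \<in> X \<Longrightarrow> le x y \<Longrightarrow> y \<in> F"
    "\<And>x y. x \<in> F \<Longrightarrow> y \<in> F \<Longrightarrow> cm x y"
    "\<And>Y. Y \<subseteq> X \<Longrightarrow> sjoin X le Y \<in> F \<Longrightarrow> \<exists>y\<in>Y. y \<in> F"
  using assms unfolding points_def by blast+

lemma opp_iff [simp]: "F \<in> opp X le cm x \<longleftrightarrow> F \<in> points X le cm \<and> x \<in> F"
  by (simp add: opp_def)

lemma opp_in_st_opens: "x \<in> X \<Longrightarrow> opp X le cm x \<in> st_opens X le cm"
  by (simp add: st_opens_def)

lemma sjoin_in_point_iff: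
  assumes "complete_join_semilattice X le" "F \<in> points X le cm" "Y \<subseteq> X"
  shows "sjoin X le Y \<in> F \<longleftrightarrow> (\<exists>y\<in>Y. y \<in> F)"
  using assms pointsD[OF assms(2)] sjoin_in sjoin_upper by metis

lemma opp_sjoin:
  assumes "complete_join_semilattice X le" "Y \<subseteq> X"
  shows "opp X le cm (sjoin X le Y) = \<Union>(opp X le cm ` Y)"
  unfolding opp_def using sjoin_in_point_iff[OF assms(1) _ assms(2)] by blast

lemma opp_mono: "x \<in> X \<Longrightarrow> y \<in> X \<Longrightarrow> le x y \<Longrightarrow> opp X le cm x \<subseteq> opp X le cm y"
  using pointsD(3) by auto

lemma cm_if_between_opp: "between (opp X le cm x) (opp X le cm y) \<Longrightarrow> cm x y"
  unfolding between_def using pointsD(4) by fastforce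

lemma spatial_imp_complete_join_semilattice: "spatial X le cm \<Longrightarrow> complete_join_semilattice X le"
  by (simp add: spatial_def semiframe_def)

lemma sf_morphism_image_subset: "sf_morphism X' le' cm' X le cm g \<Longrightarrow> g ` X' \<subseteq> X"
  by (simp add: sf_morphism_def)

section \<open>The semitopology of abstract points\<close>

context
  fixes X :: "'x set" and le cm :: "'x \<Rightarrow> 'x \<Rightarrow> bool"
  assumes cjs: "complete_join_semilattice X le"
begin

lemma Union_in_st_opens:
  assumes "S \<subseteq> st_opens X le cm"
  shows "\<Union>S \<in> st_opens X le cm"
proof -
  define Y where "Y = {x \<in> X. opp X le cm x \<in> S}"
  have Y: "Y \<subseteq> X" "S = opp X le cm ` Y"
    using assms unfolding Y_def st_opens_def by auto
  then have "\<Union>S = opp X le cm (sjoin X le Y)"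
    by (simp only: opp_sjoin[OF cjs])
  then show ?thesis
    using sjoin_in[OF cjs Y(1)] opp_in_st_opens by metis
qed

lemma points_eq_opp_top: "points X le cm = opp X le cm (sjoin X le X)"
  using pointsD(1,2) by (fastforce simp: opp_sjoin[OF cjs])

lemma semitopology_st: "semitopology (points X le cm) (st_opens X le cm)"
  unfolding semitopology_def
proof (intro conjI allI impI)
  show "st_opens X le cm \<subseteq> Pow (points X le cm)"
    unfolding st_opens_def opp_def by auto
  show "{} \<in> st_opens X le cm"
    using Union_in_st_opens[of "{}"] by simp
  show "points X le cm \<in> st_opens X le cm"
    by (simp add: points_eq_opp_top opp_in_st_opens sjoin_in[OF cjs])
qed (rule Union_in_st_opens)

lemma sjoin_st_opens: "Y \<subseteq> st_opens X le cm \<Longrightarrow> sjoin (st_opens X le cm) (\<subseteq>) Y = \<Union>Y"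
  using sjoin_opens[OF semitopology_st] .

lemma opp_sjoin_st_opens:
  assumes "Y \<subseteq> X"
  shows "opp X le cm (sjoin X le Y) = sjoin (st_opens X le cm) (\<subseteq>) (opp X le cm ` Y)"
proof -
  have "opp X le cm ` Y \<subseteq> st_opens X le cm"
    unfolding st_opens_def using assms by (rule image_mono)
  then show ?thesis
    unfolding opp_sjoin[OF cjs assms] by (rule sjoin_st_opens[symmetric])
qed

lemma sf_morphism_opp: "sf_morphism X le cm (st_opens X le cm) (\<subseteq>) between (opp X le cm)"
proof -
  have "opp X le cm (sjoin X le X) = sjoin (st_opens X le cm) (\<subseteq>) (st_opens X le cm)"
    using opp_sjoin_st_opens[of X] unfolding st_opens_def by blast
  then show ?thesis
    unfolding sf_morphism_def using opp_sjoin_st_opens cm_if_between_opp by (auto simp: st_opens_def)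
qed

lemma nbhd_st_opens_inj:
  assumes "F \<in> points X le cm" "G \<in> points X le cm"
    and "nbhd (st_opens X le cm) F = nbhd (st_opens X le cm) G"
  shows "F = G"
proof -
  have "x \<in> F \<longleftrightarrow> x \<in> G" if "x \<in> X" for x
    using assms that opp_in_st_opens[of x X le cm] by (metis nbhd_iff opp_iff)
  then show ?thesis
    using pointsD(1)[OF assms(1)] pointsD(1)[OF assms(2)] by blast
qed

lemma nbhd_st_opens_in_points:
  assumes F: "F \<in> points X le cm"
  shows "nbhd (st_opens X le cm) F \<in> points (st_opens X le cm) (\<subseteq>) between"
proof (rule pointsI)
  obtain x where "x \<in> F" "x \<in> X"
    using pointsD(1,2)[OF F] by blast
  then show "nbhd (st_opens X le cm) F \<noteq> {}"
    using F opp_in_st_opens[of x X le cm] by (metis empty_iff nbhd_iff opp_iff)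
  show "\<exists>U\<in>Y. U \<in> nbhd (st_opens X le cm) F"
    if "Y \<subseteq> st_opens X le cm" "sjoin (st_opens X le cm) (\<subseteq>) Y \<in> nbhd (st_opens X le cm) F" for Y
    using that by (auto simp: sjoin_st_opens)
qed (auto simp: between_def)

lemma opp_preimage_in_points:
  assumes Q: "Q \<in> points (st_opens X le cm) (\<subseteq>) between"
  shows "{x \<in> X. opp X le cm x \<in> Q} \<in> points X le cm" (is "?F \<in> _")
proof (rule pointsI)
  obtain x where "x \<in> X" "opp X le cm x \<in> Q"
    using pointsD(1,2)[OF Q] unfolding st_opens_def by blast
  then show "?F \<noteq> {}" by blast
  show "y \<in> ?F" if "x \<in> ?F" "y \<in> X" "le x y" for x y
  proof -
    have "opp X le cm x \<in> Q" "opp X le cm x \<subseteq> opp X le cm y"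
      using that opp_mono[of x X y le cm] by auto
    then have "opp X le cm y \<in> Q"
      using pointsD(3)[OF Q _ opp_in_st_opens[OF that(2)]] by blast
    with that(2) show ?thesis by simp
  qed
  show "cm x y" if "x \<in> ?F" "y \<in> ?F" for x y
    using that pointsD(4)[OF Q] cm_if_between_opp[of X le cm x y] by blast
  show "\<exists>y\<in>Y. y \<in> ?F" if Y: "Y \<subseteq> X" "sjoin X le Y \<in> ?F" for Y
  proof -
    have sub: "opp X le cm ` Y \<subseteq> st_opens X le cm"
      unfolding st_opens_def using Y(1) by (rule image_mono)
    have "sjoin (st_opens X le cm) (\<subseteq>) (opp X le cm ` Y) \<in> Q"
      using Y by (simp add: opp_sjoin[OF cjs] sjoin_st_opens[OF sub])
    then show ?thesis
      using pointsD(5)[OF Q sub] Y(1) by auto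
  qed
qed auto

lemma points_st_opens_eq_nbhd:
  assumes Q: "Q \<in> points (st_opens X le cm) (\<subseteq>) between"
  shows "Q = nbhd (st_opens X le cm) {x \<in> X. opp X le cm x \<in> Q}"
  using pointsD(1)[OF Q] opp_preimage_in_points[OF Q]
  by (auto simp: st_opens_def)

theorem sober_st: "sober (points X le cm) (st_opens X le cm)"
  unfolding sober_def bij_betw_def
proof (intro conjI semitopology_st)
  show "inj_on (nbhd (st_opens X le cm)) (points X le cm)"
    by (rule inj_onI) (rule nbhd_st_opens_inj)
  show "nbhd (st_opens X le cm) ` points X le cm = points (st_opens X le cm) (\<subseteq>) between"
    using nbhd_st_opens_in_points points_st_opens_eq_nbhd opp_preimage_in_points by blast
qed

end

section \<open>The functor Fr\<close>

lemma nbhd_in_points: "sober P T \<Longrightarrow> p \<in> P \<Longrightarrow> nbhd T p \<in> points T (\<subseteq>) between"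
  unfolding sober_def bij_betw_def by blast

lemma nbhd_in_opp_iff:
  "sober P T \<Longrightarrow> p \<in> P \<Longrightarrow> U \<in> T \<Longrightarrow> nbhd T p \<in> opp T (\<subseteq>) between U \<longleftrightarrow> p \<in> U"
  by (simp add: nbhd_in_points)

lemma nbhd_image_open:
  assumes sober: "sober P T" and U: "U \<in> T"
  shows "nbhd T ` U = opp T (\<subseteq>) between U"
proof (rule set_eqI)
  have T: "semitopology P T"
    using sober by (rule sober_imp_semitopology)
  have img: "nbhd T ` P = points T (\<subseteq>) between"
    using sober unfolding sober_def bij_betw_def by auto
  fix F
  show "F \<in> nbhd T ` U \<longleftrightarrow> F \<in> opp T (\<subseteq>) between U"
  proof
    assume "F \<in> nbhd T ` U"
    then obtain p where "p \<in> U" "F = nbhd T p"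
      by blast
    then show "F \<in> opp T (\<subseteq>) between U"
      using opens_subset_points[OF T U] nbhd_in_opp_iff[OF sober _ U] by blast
  next
    assume "F \<in> opp T (\<subseteq>) between U"
    then obtain p where "p \<in> P" "F = nbhd T p" "U \<in> F"
      using img by (metis imageE opp_iff)
    then show "F \<in> nbhd T ` U"
      by simp
  qed
qed

theorem spatial_opens_if_sober:
  assumes sober: "sober P T"
  shows "spatial T (\<subseteq>) between"
proof -
  have T: "semitopology P T"
    using sober by (rule sober_imp_semitopology)
  have "U \<subseteq> U'"
    if "U \<in> T" "U' \<in> T" "opp T (\<subseteq>) between U \<subseteq> opp T (\<subseteq>) between U'" for U U'
  proof
    fix p assume "p \<in> U"
    then have "nbhd T p \<in> opp T (\<subseteq>) between U'"
      using that nbhd_image_open[OF sober that(1)] by blast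
    then show "p \<in> U'"
      by simp
  qed
  moreover have "opp T (\<subseteq>) between U \<inter> opp T (\<subseteq>) between U' \<noteq> {}"
    if opens: "U \<in> T" "U' \<in> T" and "between U U'" for U U'
  proof -
    obtain p where "p \<in> U" "p \<in> U'"
      using \<open>between U U'\<close> by (auto simp: between_def)
    then have "nbhd T p \<in> nbhd T ` U \<inter> nbhd T ` U'"
      by blast
    then show ?thesis
      unfolding nbhd_image_open[OF sober opens(1)] nbhd_image_open[OF sober opens(2)] by blast
  qed
  ultimately show ?thesis
    unfolding spatial_def using semiframe_opens[OF T] by blast
qed

lemma sf_morphism_fr_map:
  assumes T: "semitopology P T" and T': "semitopology P' T'" and f: "cont P T P' T' f"
  shows "sf_morphism T' (\<subseteq>) between T (\<subseteq>) between (fr_map P f)"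
proof -
  have img: "fr_map P f ` T' \<subseteq> T"
    using f unfolding cont_def fr_map_def by auto
  have join: "fr_map P f (sjoin T' (\<subseteq>) Y) = sjoin T (\<subseteq>) (fr_map P f ` Y)" if "Y \<subseteq> T'" for Y
  proof -
    have "fr_map P f ` Y \<subseteq> T"
      using that img by blast
    moreover have "fr_map P f (\<Union>Y) = \<Union>(fr_map P f ` Y)"
      unfolding fr_map_def by blast
    ultimately show ?thesis
      using that by (simp add: sjoin_opens[OF T] sjoin_opens[OF T'])
  qed
  have top: "fr_map P f (sjoin T' (\<subseteq>) T') = sjoin T (\<subseteq>) T"
  proof -
    have "\<Union>T = P" "\<Union>T' = P'"
      using T T' unfolding semitopology_def by auto
    moreover have "fr_map P f P' = P"
      using f unfolding fr_map_def cont_def by auto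
    ultimately show ?thesis
      by (simp add: sjoin_opens[OF T] sjoin_opens[OF T'])
  qed
  have "between U V" if "between (fr_map P f U) (fr_map P f V)" for U V
    using that unfolding between_def fr_map_def by blast
  with img join top show ?thesis
    unfolding sf_morphism_def by simp
qed

lemma fr_map_id: "U \<subseteq> P \<Longrightarrow> fr_map P id U = U"
  unfolding fr_map_def by auto

lemma fr_map_comp: "f ` P1 \<subseteq> P2 \<Longrightarrow> fr_map P1 (h \<circ> f) U = fr_map P1 f (fr_map P2 h U)"
  unfolding fr_map_def by auto

section \<open>The functor St\<close>

lemma st_map_in_points:
  assumes cjs': "complete_join_semilattice X' le'" and cjs: "complete_join_semilattice X le"
    and g: "sf_morphism X' le' cm' X le cm g" and F: "F \<in> points X le cm"
  shows "st_map X' g F \<in> points X' le' cm'"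
proof (rule pointsI)
  have gX: "g x \<in> X" if "x \<in> X'" for x
    using sf_morphism_image_subset[OF g] that by blast
  have g_join: "g (sjoin X' le' Y) = sjoin X le (g ` Y)" if "Y \<subseteq> X'" for Y
    using g that unfolding sf_morphism_def by blast
  have "sjoin X le X \<in> F"
    using sjoin_in_point_iff[OF cjs F, of X] pointsD(1,2)[OF F] by blast
  then have "sjoin X' le' X' \<in> st_map X' g F"
    using g sjoin_in[OF cjs'] unfolding sf_morphism_def st_map_def by auto
  then show "st_map X' g F \<noteq> {}"
    by blast
  show "y \<in> st_map X' g F" if x: "x \<in> st_map X' g F" and y: "y \<in> X'" "le' x y" for x y
  proof -
    have "x \<in> X'" "g x \<in> F"
      using x unfolding st_map_def by auto
    moreover have "g y = sjoin X le {g x, g y}"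
      using g_join[of "{x, y}"] sjoin_pair_le[OF cjs' \<open>x \<in> X'\<close> y] y(1) \<open>x \<in> X'\<close> by simp
    ultimately have "g y \<in> F"
      using sjoin_in_point_iff[OF cjs F, of "{g x, g y}"] gX y(1) by auto
    then show ?thesis
      using y(1) unfolding st_map_def by simp
  qed
  show "cm' x y" if "x \<in> st_map X' g F" "y \<in> st_map X' g F" for x y
    using that pointsD(4)[OF F] g unfolding st_map_def sf_morphism_def by blast
  show "\<exists>y\<in>Y. y \<in> st_map X' g F" if Y: "Y \<subseteq> X'" "sjoin X' le' Y \<in> st_map X' g F" for Y
  proof -
    have "sjoin X le (g ` Y) \<in> F" "g ` Y \<subseteq> X"
      using Y g_join gX unfolding st_map_def by auto
    then show ?thesis
      using sjoin_in_point_iff[OF cjs F] Y(1) unfolding st_map_def by blast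
  qed
qed (simp add: st_map_def)

text \<open>This is the naturality square of \<open>Op\<close>; read as a preimage it also gives continuity of \<open>St(g)\<close>.\<close>

lemma fr_map_st_map_opp:
  assumes "complete_join_semilattice X' le'" "complete_join_semilattice X le"
    and g: "sf_morphism X' le' cm' X le cm g" and "x' \<in> X'"
  shows "fr_map (points X le cm) (st_map X' g) (opp X' le' cm' x') = opp X le cm (g x')"
proof (rule set_eqI)
  fix F
  have "F \<in> points X le cm \<Longrightarrow> st_map X' g F \<in> points X' le' cm'"
    by (rule st_map_in_points[OF assms(1-3)])
  then show "F \<in> fr_map (points X le cm) (st_map X' g) (opp X' le' cm' x') \<longleftrightarrow> F \<in> opp X le cm (g x')"
    using \<open>x' \<in> X'\<close> unfolding fr_map_def st_map_def by simp blast
qed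

lemma cont_st_map:
  assumes cjs': "complete_join_semilattice X' le'" and cjs: "complete_join_semilattice X le"
    and g: "sf_morphism X' le' cm' X le cm g"
  shows "cont (points X le cm) (st_opens X le cm) (points X' le' cm') (st_opens X' le' cm') (st_map X' g)"
  unfolding cont_def
proof (intro conjI ballI)
  show "st_map X' g ` points X le cm \<subseteq> points X' le' cm'"
    using st_map_in_points[OF cjs' cjs g] by blast
  fix U assume "U \<in> st_opens X' le' cm'"
  then obtain x' where "x' \<in> X'" "U = opp X' le' cm' x'"
    unfolding st_opens_def by blast
  moreover have "g x' \<in> X" if "x' \<in> X'" for x'
    using sf_morphism_image_subset[OF g] that by blast
  ultimately show "st_map X' g -` U \<inter> points X le cm \<in> st_opens X le cm"
    using fr_map_st_map_opp[OF cjs' cjs g] unfolding fr_map_def st_opens_def by auto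
qed

lemma st_map_id: "F \<subseteq> X \<Longrightarrow> st_map X id F = F"
  unfolding st_map_def by auto

lemma st_map_comp: "g1 ` X1 \<subseteq> X2 \<Longrightarrow> st_map X1 (g2 \<circ> g1) F = st_map X1 g1 (st_map X2 g2 F)"
  unfolding st_map_def by auto

section \<open>The natural isomorphisms\<close>

lemma cont_inv_into:
  assumes bij: "bij_betw h P Q" and T: "T \<subseteq> Pow P" and open_map: "\<And>U. U \<in> T \<Longrightarrow> h ` U \<in> S"
  shows "cont Q S P T (inv_into P h)"
  unfolding cont_def
proof (intro conjI ballI)
  show "inv_into P h ` Q \<subseteq> P"
    using bij by (auto simp: bij_betw_def intro: inv_into_into)
  fix U assume U: "U \<in> T"
  have "U \<subseteq> P"
    using T U by blast
  have "inv_into P h -` U \<inter> Q = h ` U"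
  proof (rule set_eqI)
    fix q
    show "q \<in> inv_into P h -` U \<inter> Q \<longleftrightarrow> q \<in> h ` U"
    proof (cases "q \<in> Q")
      case True
      then obtain p where p: "p \<in> P" "q = h p"
        using bij by (auto simp: bij_betw_def)
      with True bij show ?thesis
        using inj_on_image_mem_iff[OF bij_betw_imp_inj_on[OF bij] p(1) \<open>U \<subseteq> P\<close>]
        by (simp add: bij_betw_inv_into_left)
    next
      case False
      with bij \<open>U \<subseteq> P\<close> show ?thesis
        by (auto simp: bij_betw_def)
    qed
  qed
  then show "inv_into P h -` U \<inter> Q \<in> S"
    using open_map[OF U] by simp
qed

lemma sf_morphism_inv_into:
  assumes cjs: "complete_join_semilattice X' le'" and bij: "bij_betw g X' X"
    and g: "sf_morphism X' le' cm' X le cm g"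
    and preserves_cm: "\<And>x y. x \<in> X' \<Longrightarrow> y \<in> X' \<Longrightarrow> cm' x y \<Longrightarrow> cm (g x) (g y)"
  shows "sf_morphism X le cm X' le' cm' (inv_into X' g)"
proof -
  have join: "g (sjoin X' le' Y) = sjoin X le (g ` Y)" if "Y \<subseteq> X'" for Y
    using g that unfolding sf_morphism_def by blast
  have into: "inv_into X' g x \<in> X'" if "x \<in> X" for x
    using bij that by (auto simp: bij_betw_def intro: inv_into_into)
  have "sjoin X le X = g (sjoin X' le' X')"
    using g unfolding sf_morphism_def by simp
  then have top: "inv_into X' g (sjoin X le X) = sjoin X' le' X'"
    using bij_betw_inv_into_left[OF bij sjoin_in[OF cjs order_refl]] by simp
  have "cm x y" if "x \<in> X" "y \<in> X" "cm' (inv_into X' g x) (inv_into X' g y)" for x y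
    using preserves_cm[OF into into that(3)] that(1,2)
    by (simp add: bij_betw_inv_into_right[OF bij])
  with into top show ?thesis
    unfolding sf_morphism_def using sjoin_inv_into[OF cjs bij join] by blast
qed

lemma cont_nbhd:
  assumes sober: "sober P T"
  shows "cont P T (points T (\<subseteq>) between) (st_opens T (\<subseteq>) between) (nbhd T)"
  unfolding cont_def
proof (intro conjI ballI)
  show "nbhd T ` P \<subseteq> points T (\<subseteq>) between"
    using sober by (simp add: sober_def bij_betw_def)
  fix V assume "V \<in> st_opens T (\<subseteq>) between"
  then obtain U where U: "U \<in> T" "V = opp T (\<subseteq>) between U"
    unfolding st_opens_def by blast
  then have "nbhd T -` V \<inter> P = U"
    using opens_subset_points[OF sober_imp_semitopology[OF sober]] nbhd_in_opp_iff[OF sober] by blast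
  with U show "nbhd T -` V \<inter> P \<in> T"
    by simp
qed

lemma nbhd_inverse:
  assumes sober: "sober P T"
  shows "\<exists>k. cont (points T (\<subseteq>) between) (st_opens T (\<subseteq>) between) P T k \<and>
           (\<forall>p\<in>P. k (nbhd T p) = p) \<and> (\<forall>F\<in>points T (\<subseteq>) between. nbhd T (k F) = F)"
proof -
  have bij: "bij_betw (nbhd T) P (points T (\<subseteq>) between)"
    using sober by (simp add: sober_def)
  have "cont (points T (\<subseteq>) between) (st_opens T (\<subseteq>) between) P T (inv_into P (nbhd T))"
    using sober_imp_semitopology[OF sober] bij nbhd_image_open[OF sober]
    by (intro cont_inv_into) (auto simp: semitopology_def st_opens_def)
  then show ?thesis
    using bij bij_betw_inv_into_left bij_betw_inv_into_right by fast
qed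

lemma opp_inverse:
  assumes spatial: "spatial X le cm"
  shows "\<exists>k. sf_morphism (st_opens X le cm) (\<subseteq>) between X le cm k \<and>
           (\<forall>x\<in>X. k (opp X le cm x) = x) \<and> (\<forall>U\<in>st_opens X le cm. opp X le cm (k U) = U)"
proof -
  have cjs: "complete_join_semilattice X le"
    using spatial by (rule spatial_imp_complete_join_semilattice)
  have "inj_on (opp X le cm) X"
  proof (rule inj_onI)
    fix x y assume "x \<in> X" "y \<in> X" "opp X le cm x = opp X le cm y"
    then have "le x y" "le y x"
      using spatial unfolding spatial_def by auto
    with \<open>x \<in> X\<close> \<open>y \<in> X\<close> show "x = y"
      using cjs unfolding complete_join_semilattice_def by blast
  qed
  then have bij: "bij_betw (opp X le cm) X (st_opens X le cm)"
    by (simp add: bij_betw_def st_opens_def)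
  have "between (opp X le cm x) (opp X le cm y)" if "x \<in> X" "y \<in> X" "cm x y" for x y
    using spatial that unfolding spatial_def between_def by blast
  then have "sf_morphism (st_opens X le cm) (\<subseteq>) between X le cm (inv_into X (opp X le cm))"
    by (rule sf_morphism_inv_into[OF cjs bij sf_morphism_opp[OF cjs]])
  then show ?thesis
    using bij bij_betw_inv_into_left bij_betw_inv_into_right by fast
qed

lemma st_map_fr_map_nbhd:
  "cont P T P' T' f \<Longrightarrow> p \<in> P \<Longrightarrow> st_map T' (fr_map P f) (nbhd T p) = nbhd T' (f p)"
  unfolding st_map_def fr_map_def cont_def by auto

theorem theorem8p18:
  shows
  "\<comment> \<open>Fr on objects: Sober -> Spatial\<close>
   (\<forall>(P::'a set) T. sober P T \<longrightarrow> spatial T (\<subseteq>) between) \<and>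
   \<comment> \<open>Fr on morphisms\<close>
   (\<forall>(P::'a set) T (P'::'b set) T' f. sober P T \<and> sober P' T' \<and> cont P T P' T' f \<longrightarrow>
      sf_morphism T' (\<subseteq>) between T (\<subseteq>) between (fr_map P f)) \<and>
   \<comment> \<open>Fr preserves identities\<close>
   (\<forall>(P::'a set) T. sober P T \<longrightarrow> (\<forall>U\<in>T. fr_map P id U = U)) \<and>
   \<comment> \<open>Fr preserves composition (contravariantly)\<close>
   (\<forall>(P1::'a set) T1 (P2::'b set) T2 (P3::'c set) T3 f h.
      sober P1 T1 \<and> sober P2 T2 \<and> sober P3 T3 \<and> cont P1 T1 P2 T2 f \<and> cont P2 T2 P3 T3 h \<longrightarrow>
      (\<forall>U\<in>T3. fr_map P1 (h \<circ> f) U = fr_map P1 f (fr_map P2 h U))) \<and>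
   \<comment> \<open>St on objects: Spatial -> Sober\<close>
   (\<forall>(X::'x set) le cm. spatial X le cm \<longrightarrow> sober (points X le cm) (st_opens X le cm)) \<and>
   \<comment> \<open>St on morphisms\<close>
   (\<forall>(X'::'y set) le' cm' (X::'x set) le cm g.
      spatial X' le' cm' \<and> spatial X le cm \<and> sf_morphism X' le' cm' X le cm g \<longrightarrow>
      cont (points X le cm) (st_opens X le cm) (points X' le' cm') (st_opens X' le' cm') (st_map X' g)) \<and>
   \<comment> \<open>St preserves identities\<close>
   (\<forall>(X::'x set) le cm. spatial X le cm \<longrightarrow> (\<forall>F\<in>points X le cm. st_map X id F = F)) \<and>
   \<comment> \<open>St preserves composition (contravariantly)\<close>
   (\<forall>(X1::'x set) le1 cm1 (X2::'y set) le2 cm2 (X3::'z set) le3 cm3 g1 g2.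
      spatial X1 le1 cm1 \<and> spatial X2 le2 cm2 \<and> spatial X3 le3 cm3 \<and>
      sf_morphism X1 le1 cm1 X2 le2 cm2 g1 \<and> sf_morphism X2 le2 cm2 X3 le3 cm3 g2 \<longrightarrow>
      (\<forall>F\<in>points X3 le3 cm3. st_map X1 (g2 \<circ> g1) F = st_map X1 g1 (st_map X2 g2 F))) \<and>
   \<comment> \<open>nbhd is an isomorphism in Sober\<close>
   (\<forall>(P::'a set) T. sober P T \<longrightarrow>
      cont P T (points T (\<subseteq>) between) (st_opens T (\<subseteq>) between) (nbhd T) \<and>
      (\<exists>k. cont (points T (\<subseteq>) between) (st_opens T (\<subseteq>) between) P T k \<and>
           (\<forall>p\<in>P. k (nbhd T p) = p) \<and>
           (\<forall>F\<in>points T (\<subseteq>) between. nbhd T (k F) = F))) \<and>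
   \<comment> \<open>nbhd is natural\<close>
   (\<forall>(P::'a set) T (P'::'b set) T' f. sober P T \<and> sober P' T' \<and> cont P T P' T' f \<longrightarrow>
      (\<forall>p\<in>P. st_map T' (fr_map P f) (nbhd T p) = nbhd T' (f p))) \<and>
   \<comment> \<open>Op is an isomorphism in Spatial\<close>
   (\<forall>(X::'x set) le cm. spatial X le cm \<longrightarrow>
      sf_morphism X le cm (st_opens X le cm) (\<subseteq>) between (opp X le cm) \<and>
      (\<exists>k. sf_morphism (st_opens X le cm) (\<subseteq>) between X le cm k \<and>
           (\<forall>x\<in>X. k (opp X le cm x) = x) \<and>
           (\<forall>U\<in>st_opens X le cm. opp X le cm (k U) = U))) \<and>
   \<comment> \<open>Op is natural\<close>
   (\<forall>(X'::'y set) le' cm' (X::'x set) le cm g.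
      spatial X' le' cm' \<and> spatial X le cm \<and> sf_morphism X' le' cm' X le cm g \<longrightarrow>
      (\<forall>x'\<in>X'. fr_map (points X le cm) (st_map X' g) (opp X' le' cm' x') = opp X le cm (g x')))"
  \<comment> \<open>each conjunct is one lemma above; the other rules discharge its weaker side conditions\<close>
  by (intro conjI allI impI ballI; (elim conjE)?;
      (assumption | rule spatial_opens_if_sober sf_morphism_fr_map fr_map_id fr_map_comp
        sober_st cont_st_map st_map_id st_map_comp cont_nbhd nbhd_inverse st_map_fr_map_nbhd
        sf_morphism_opp opp_inverse fr_map_st_map_opp sober_imp_semitopology
        spatial_imp_complete_join_semilattice opens_subset_points pointsD(1) cont_image_subset
        sf_morphism_image_subset)+)

end
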